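(* Let $n\ge1$, $\sigma^2>0$, $\alpha>0$, $Y$ a random vector in $\mathbb{R}^n$, and $\omega\sim\mathcal{N}(0,\sigma^2I_n)$ independent of $Y$. Let $g:\mathbb{R}^n\to\mathbb{R}^n$ be such that the quantities below are well defined. Define $$\overline{\mathrm{CV}}_\alpha=\big\|Y-\mathbb{E}[g(Y+\sqrt\alpha\,\omega)\mid Y]\big\|_2^2+\frac{2}{\sqrt\alpha}\,\mathbb{E}\big[\omega^\top g(Y+\sqrt\alpha\,\omega)\mid Y\big].$$ Then $\overline{\mathrm{CV}}_\alpha=\mathrm{SURE}(g*\varphi_{\alpha\sigma^2})$.
   Context: $\varphi_{s}$ is the density of $\mathcal{N}(0,sI_n)$, and $g*\varphi_s(y)=\int g(y-z)\varphi_s(z)\,\mathrm{d}z$ (componentwise). For a differentiable $h:\mathbb{R}^n\to\mathbb{R}^n$, Stein's unbiased risk estimate is $\mathrm{SURE}(h)=\|Y-h(Y)\|_2^2+2\sigma^2\,\nabla\cdot h(Y)$, where $\nabla\cdot h=\sum_{i=1}^n\partial h_i/\partial y_i$ is the divergence. *)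

theory Defs
  imports "HOL-Analysis.Analysis"
begin

definition gauss_density :: "real \<Rightarrow> real^'n \<Rightarrow> real" where
  "gauss_density s z = (2 * pi * s) powr (- real CARD('n) / 2) * exp (- (norm z)\<^sup>2 / (2 * s))"

definition gauss_conv :: "(real^'n \<Rightarrow> real^'n) \<Rightarrow> real \<Rightarrow> real^'n \<Rightarrow> real^'n" where
  "gauss_conv g s y = (\<integral>z. gauss_density s z *\<^sub>R g (y - z) \<partial>lborel)"

definition divergence :: "(real^'n \<Rightarrow> real^'n) \<Rightarrow> real^'n \<Rightarrow> real" where
  "divergence h y = (\<Sum>i\<in>UNIV. deriv (\<lambda>t. h (y + t *\<^sub>R axis i 1) $ i) 0)"

definition SURE :: "real \<Rightarrow> (real^'n \<Rightarrow> real^'n) \<Rightarrow> real^'n \<Rightarrow> real" where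
  "SURE sigma2 h y = (norm (y - h y))\<^sup>2 + 2 * sigma2 * divergence h y"

end

theory Submission
  imports Defs
begin

text \<open>Write s = alpha sigma2. The substitution z = - sqrt alpha w turns both Gaussian averages
  into integrals against phi_s: the first becomes the convolution (g * phi_s)(y), the second becomes
  -(1 / sqrt alpha) times the integral of phi_s(z) (z \<bullet> g(y - z)). On the other side, shifting
  y by t e_i in the convolution is the same as shifting the density, and
  phi_s(z + t e_i) = phi_s(z) exp(- t z_i / s - t^2 / (2 s)); differentiating at t = 0 under the
  integral sign (Stein's identity) gives
  divergence (g * phi_s)(y) = -(1/s) times the integral of phi_s(z) (z \<bullet> g(y - z)).
  The exchange of derivative and integral rests on a quadratic bound for the remainder of this
  exponential, with majorant phi_s(z) exp(2 |z_i| / s) |g(y - z)|, which is integrable because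
  it is dominated by two shifted copies of phi_s |g(y - .)|.\<close>

lemma has_real_derivative_at_0_if_quadratic_remainder:
  fixes F :: "real \<Rightarrow> real"
  assumes "\<And>t. \<bar>t\<bar> \<le> 1 \<Longrightarrow> \<bar>F t - F 0 - t * D\<bar> \<le> M * t\<^sup>2"
  shows "(F has_real_derivative D) (at 0)"
proof -
  have "\<bar>(F t - F 0) / t - D\<bar> \<le> \<bar>M\<bar> * \<bar>t\<bar>" if "t \<noteq> 0" "\<bar>t\<bar> \<le> 1" for t
  proof -
    have "\<bar>(F t - F 0) / t - D\<bar> = \<bar>F t - F 0 - t * D\<bar> / \<bar>t\<bar>"
      using \<open>t \<noteq> 0\<close> by (simp add: diff_divide_distrib flip: abs_divide)
    also have "\<dots> \<le> M * t\<^sup>2 / \<bar>t\<bar>"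
      using assms[OF \<open>\<bar>t\<bar> \<le> 1\<close>] by (rule divide_right_mono) simp
    also have "\<dots> = M * \<bar>t\<bar>"
      using \<open>t \<noteq> 0\<close> by (cases "t \<ge> 0") (simp_all add: power2_eq_square)
    also have "\<dots> \<le> \<bar>M\<bar> * \<bar>t\<bar>"
      by (simp add: mult_right_mono)
    finally show ?thesis .
  qed
  then have "eventually (\<lambda>t. norm ((F t - F 0) / (t - 0) - D) \<le> \<bar>M\<bar> * \<bar>t\<bar>) (at 0)"
    unfolding eventually_at by (intro exI[of _ 1]) (auto simp: dist_real_def)
  moreover have "((\<lambda>t. \<bar>M\<bar> * \<bar>t\<bar>) \<longlongrightarrow> 0) (at 0)"
    by (auto intro!: tendsto_eq_intros)
  ultimately have "((\<lambda>t. (F t - F 0) / (t - 0) - D) \<longlongrightarrow> 0) (at 0)"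
    by (rule Lim_null_comparison)
  then show ?thesis
    unfolding has_field_derivative_iff LIM_zero_iff .
qed

lemma has_real_derivative_integral_quadratic_remainder:
  fixes A :: "real \<Rightarrow> 'a \<Rightarrow> real"
  assumes "\<And>t. integrable M (A t)" and "integrable M D" and "integrable M B"
    and "\<And>t x. \<bar>t\<bar> \<le> 1 \<Longrightarrow> \<bar>A t x - A 0 x - t * D x\<bar> \<le> t\<^sup>2 * B x"
  shows "((\<lambda>t. \<integral>x. A t x \<partial>M) has_real_derivative (\<integral>x. D x \<partial>M)) (at 0)"
proof (rule has_real_derivative_at_0_if_quadratic_remainder)
  fix t :: real
  assume t: "\<bar>t\<bar> \<le> 1"
  have int: "integrable M (\<lambda>x. A t x - A 0 x - t * D x)"
    using assms(1,2) by simp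
  have "\<bar>(\<integral>x. A t x \<partial>M) - (\<integral>x. A 0 x \<partial>M) - t * (\<integral>x. D x \<partial>M)\<bar>
      = \<bar>\<integral>x. A t x - A 0 x - t * D x \<partial>M\<bar>"
    using assms(1,2) by (simp add: integral_diff)
  also have "\<dots> \<le> (\<integral>x. \<bar>A t x - A 0 x - t * D x\<bar> \<partial>M)"
    by (rule integral_abs_bound)
  also have "\<dots> \<le> (\<integral>x. t\<^sup>2 * B x \<partial>M)"
    by (intro integral_mono integrable_abs int integrable_mult_right assms(3) assms(4)[OF t])
  also have "\<dots> = (\<integral>x. B x \<partial>M) * t\<^sup>2"
    by (simp add: mult.commute)
  finally show "\<bar>(\<integral>x. A t x \<partial>M) - (\<integral>x. A 0 x \<partial>M) - t * (\<integral>x. D x \<partial>M)\<bar>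
      \<le> (\<integral>x. B x \<partial>M) * t\<^sup>2" .
qed

lemma abs_exp_minus_one_minus_le: "\<bar>exp q - 1 - q\<bar> \<le> q\<^sup>2 * exp \<bar>q\<bar>"
  for q :: real
proof -
  obtain \<xi> where \<xi>: "\<bar>\<xi>\<bar> \<le> \<bar>q\<bar>" "exp q = (\<Sum>m<2. q ^ m / fact m) + exp \<xi> / fact 2 * q ^ 2"
    using Maclaurin_exp_le[of q 2] by blast
  have "exp \<xi> \<le> exp \<bar>q\<bar>"
    using \<xi>(1) by simp
  then have "exp \<xi> / 2 \<le> exp \<bar>q\<bar>"
    using exp_gt_zero[of \<xi>] by linarith
  have "\<bar>exp q - 1 - q\<bar> = exp \<xi> / 2 * q\<^sup>2"
    using \<xi>(2) by (simp add: eval_nat_numeral)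
  also have "\<dots> \<le> exp \<bar>q\<bar> * q\<^sup>2"
    using \<open>exp \<xi> / 2 \<le> exp \<bar>q\<bar>\<close> by (rule mult_right_mono) simp
  finally show ?thesis
    by (simp only: mult.commute)
qed

lemma nn_integral_lborel_affine:
  fixes t :: "'a::euclidean_space" and f :: "'a \<Rightarrow> ennreal"
  assumes [measurable]: "f \<in> borel_measurable borel" and c: "c \<noteq> 0"
  shows "(\<integral>\<^sup>+x. f x \<partial>lborel) = ennreal (\<bar>c\<bar> ^ DIM('a)) * (\<integral>\<^sup>+x. f (t + c *\<^sub>R x) \<partial>lborel)"
  by (subst lborel_affine[OF c, of t])
     (simp add: nn_integral_density nn_integral_distr nn_integral_cmult)

lemma lborel_integrable_affine:
  fixes f :: "'a::euclidean_space \<Rightarrow> 'b::{banach, second_countable_topology}"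
  assumes f: "integrable lborel f" and c: "c \<noteq> 0"
  shows "integrable lborel (\<lambda>x. f (t + c *\<^sub>R x))"
  using f c f[THEN borel_measurable_integrable] unfolding integrable_iff_bounded
  by (subst (asm) nn_integral_lborel_affine[where c=c and t=t]) (auto simp: ennreal_mult_less_top)

lemma lborel_integrable_affine_iff:
  fixes f :: "'a::euclidean_space \<Rightarrow> 'b::{banach, second_countable_topology}"
  assumes "c \<noteq> 0"
  shows "integrable lborel (\<lambda>x. f (t + c *\<^sub>R x)) \<longleftrightarrow> integrable lborel f"
  using assms lborel_integrable_affine[of f c t]
    lborel_integrable_affine[of "\<lambda>x. f (t + c *\<^sub>R x)" "1 / c" "- t /\<^sub>R c"]
  by (auto simp: field_simps)

lemma lborel_integral_affine:
  fixes f :: "'a::euclidean_space \<Rightarrow> 'b::{banach, second_countable_topology}"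
  assumes c: "c \<noteq> 0"
  shows "(\<integral>x. f x \<partial>lborel) = \<bar>c\<bar> ^ DIM('a) *\<^sub>R (\<integral>x. f (t + c *\<^sub>R x) \<partial>lborel)"
proof cases
  assume f[measurable]: "integrable lborel f"
  then show ?thesis
    using c f[THEN borel_measurable_integrable] lborel_integrable_affine[OF f c, of t]
    by (subst lborel_affine[OF c, of t]) (simp add: integral_density integral_distr)
next
  assume "\<not> integrable lborel f"
  with c show ?thesis
    by (simp add: lborel_integrable_affine_iff not_integrable_integral_eq)
qed

lemma borel_measurable_vec_nth [measurable]:
  "f \<in> borel_measurable M \<Longrightarrow> (\<lambda>x. (f x :: real^'n) $ i) \<in> borel_measurable M"
  by (rule borel_measurable_continuous_on[of "\<lambda>v. v $ i"])
     (auto intro: linear_continuous_on bounded_linear_vec_nth)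

lemma borel_measurable_gauss_density [measurable]: "gauss_density s \<in> borel_measurable borel"
  unfolding gauss_density_def by measurable

lemma gauss_density_pos: "s > 0 \<Longrightarrow> gauss_density s z > 0"
  unfolding gauss_density_def by simp

lemma gauss_density_nonneg: "gauss_density s z \<ge> 0"
  unfolding gauss_density_def by simp

lemma power2_norm_axis_add:
  fixes z :: "real^'n"
  shows "(norm (t *\<^sub>R axis i 1 + z))\<^sup>2 = t\<^sup>2 + 2 * t * z $ i + (norm z)\<^sup>2"
proof -
  have "(norm (t *\<^sub>R axis i 1 + z))\<^sup>2 = (t *\<^sub>R axis i 1 + z) \<bullet> (t *\<^sub>R axis i 1 + z)"
    by (rule power2_norm_eq_inner)
  also have "\<dots> = t\<^sup>2 * (axis i 1 \<bullet> axis i (1::real)) + 2 * t * (axis i 1 \<bullet> z) + z \<bullet> z"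
    by (simp add: inner_add_left inner_add_right inner_commute[of z "axis i 1"] power2_eq_square algebra_simps)
  also have "\<dots> = t\<^sup>2 + 2 * t * z $ i + (norm z)\<^sup>2"
    by (simp add: inner_axis_axis inner_axis' power2_norm_eq_inner)
  finally show ?thesis .
qed

lemma gauss_density_translate_axis:
  fixes z :: "real^'n"
  assumes "s > 0"
  shows "gauss_density s (t *\<^sub>R axis i 1 + z)
    = gauss_density s z * exp (- t * z $ i / s - t\<^sup>2 / (2 * s))"
proof -
  have "- (norm (t *\<^sub>R axis i 1 + z))\<^sup>2 / (2 * s)
      = - (norm z)\<^sup>2 / (2 * s) + (- t * z $ i / s - t\<^sup>2 / (2 * s))"
    unfolding power2_norm_axis_add using assms by (simp add: field_simps)
  then show ?thesis
    unfolding gauss_density_def by (simp only: exp_add mult.assoc)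
qed

lemma gauss_density_rescale:
  fixes w :: "real^'n"
  assumes "s > 0" and "c \<noteq> 0"
  shows "\<bar>c\<bar> ^ CARD('n) * gauss_density (c\<^sup>2 * s) (c *\<^sub>R w) = gauss_density s w"
proof -
  let ?e = "- real CARD('n) / 2"
  have "2 * pi * (c\<^sup>2 * s) = \<bar>c\<bar> powr 2 * (2 * pi * s)"
    by simp
  then have "(2 * pi * (c\<^sup>2 * s)) powr ?e = \<bar>c\<bar> powr (2 * ?e) * (2 * pi * s) powr ?e"
    by (simp only: powr_mult powr_powr)
  moreover have "\<bar>c\<bar> ^ CARD('n) * \<bar>c\<bar> powr (2 * ?e) = 1"
    using assms by (simp add: powr_minus powr_realpow)
  ultimately have "\<bar>c\<bar> ^ CARD('n) * (2 * pi * (c\<^sup>2 * s)) powr ?e = (2 * pi * s) powr ?e"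
    by (simp only: mult.assoc[symmetric])
  moreover have "(norm (c *\<^sub>R w))\<^sup>2 / (2 * (c\<^sup>2 * s)) = (norm w)\<^sup>2 / (2 * s)"
    using assms by (simp add: power_mult_distrib)
  ultimately show ?thesis
    unfolding gauss_density_def by (simp add: mult.assoc)
qed

lemma integral_gauss_density_rescale:
  fixes f :: "real^'n \<Rightarrow> 'b::{banach, second_countable_topology}"
  assumes "s > 0" and "c \<noteq> 0"
  shows "(\<integral>z. gauss_density (c\<^sup>2 * s) z *\<^sub>R f z \<partial>lborel)
    = (\<integral>w. gauss_density s w *\<^sub>R f (c *\<^sub>R w) \<partial>lborel)"
proof -
  have "(\<integral>z. gauss_density (c\<^sup>2 * s) z *\<^sub>R f z \<partial>lborel)
      = \<bar>c\<bar> ^ CARD('n) *\<^sub>R (\<integral>w. gauss_density (c\<^sup>2 * s) (c *\<^sub>R w) *\<^sub>R f (c *\<^sub>R w) \<partial>lborel)"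
    using lborel_integral_affine[OF assms(2), of "\<lambda>z. gauss_density (c\<^sup>2 * s) z *\<^sub>R f z" 0]
    by simp
  also have "\<dots> = (\<integral>w. (\<bar>c\<bar> ^ CARD('n) * gauss_density (c\<^sup>2 * s) (c *\<^sub>R w)) *\<^sub>R f (c *\<^sub>R w) \<partial>lborel)"
    by (simp flip: integral_scaleR_right)
  finally show ?thesis
    by (simp only: gauss_density_rescale[OF assms])
qed

lemma gauss_density_mult_exp_abs_le:
  fixes z :: "real^'n"
  assumes "s > 0"
  shows "gauss_density s z * exp (a * \<bar>z $ i\<bar> / s)
    \<le> exp (a\<^sup>2 / (2 * s)) * (gauss_density s ((- a) *\<^sub>R axis i 1 + z) + gauss_density s (a *\<^sub>R axis i 1 + z))"
proof -
  have "exp (a * \<bar>z $ i\<bar> / s) \<le> exp (a * z $ i / s) + exp (- a * z $ i / s)"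
    by (cases "z $ i \<ge> 0") (auto intro: add_increasing add_increasing2)
  then have "gauss_density s z * exp (a * \<bar>z $ i\<bar> / s)
      \<le> gauss_density s z * (exp (a * z $ i / s) + exp (- a * z $ i / s))"
    using gauss_density_pos[OF assms, of z] by (intro mult_left_mono) auto
  also have "\<dots> = exp (a\<^sup>2 / (2 * s)) * (gauss_density s ((- a) *\<^sub>R axis i 1 + z) + gauss_density s (a *\<^sub>R axis i 1 + z))"
    unfolding gauss_density_translate_axis[OF assms]
    by (simp add: algebra_simps flip: exp_add)
  finally show ?thesis .
qed

text \<open>By gauss_density_translate_axis, the exponential here is phi_s(t e_i + z) / phi_s(z) with x = z_i,
  so this bounds its first-order Taylor remainder in t.\<close>
lemma gauss_tilt_remainder_le:
  fixes s t x :: real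
  assumes s: "s > 0" and t: "\<bar>t\<bar> \<le> 1"
  shows "\<bar>exp (- t * x / s - t\<^sup>2 / (2 * s)) - 1 + t * x / s\<bar>
    \<le> t\<^sup>2 * (2 * exp (1 / s) + 1 / (2 * s)) * exp (2 * \<bar>x\<bar> / s)"
proof -
  define q where "q = - t * x / s - t\<^sup>2 / (2 * s)"
  define u where "u = \<bar>x\<bar> / s + 1 / (2 * s)"
  define E where "E = exp (2 * \<bar>x\<bar> / s)"
  have "u \<ge> 0" and "1 \<le> E"
    using s by (simp_all add: u_def E_def)
  have "\<bar>t\<bar> * \<bar>t\<bar> \<le> \<bar>t\<bar> * 1"
    using t by (intro mult_left_mono) auto
  then have "t\<^sup>2 \<le> \<bar>t\<bar>"
    by (simp add: power2_eq_square)
  have "\<bar>q\<bar> \<le> \<bar>t\<bar> * \<bar>x\<bar> / s + t\<^sup>2 / (2 * s)"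
    unfolding q_def using s by (auto simp: abs_mult intro: order_trans[OF abs_triangle_ineq4])
  also have "\<dots> \<le> \<bar>t\<bar> * u"
    using s \<open>t\<^sup>2 \<le> \<bar>t\<bar>\<close> by (simp add: u_def distrib_left divide_right_mono)
  finally have "\<bar>q\<bar> \<le> \<bar>t\<bar> * u" .
  then have "\<bar>q\<bar> \<le> u" and "q\<^sup>2 \<le> t\<^sup>2 * u\<^sup>2"
    using t \<open>u \<ge> 0\<close> mult_left_le_one_le[of u "\<bar>t\<bar>"] power_mono[of "\<bar>q\<bar>" "\<bar>t\<bar> * u" 2]
    by (auto simp: power_mult_distrib)
  have "u\<^sup>2 \<le> 2 * exp u"
    using exp_lower_Taylor_quadratic[OF \<open>u \<ge> 0\<close>] \<open>u \<ge> 0\<close> by simp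
  have "\<bar>exp q - 1 - q\<bar> \<le> q\<^sup>2 * exp \<bar>q\<bar>"
    by (rule abs_exp_minus_one_minus_le)
  also have "\<dots> \<le> t\<^sup>2 * u\<^sup>2 * exp u"
    using \<open>\<bar>q\<bar> \<le> u\<close> \<open>q\<^sup>2 \<le> t\<^sup>2 * u\<^sup>2\<close> by (intro mult_mono) auto
  also have "\<dots> \<le> t\<^sup>2 * (2 * exp u * exp u)"
    using \<open>u\<^sup>2 \<le> 2 * exp u\<close> by (simp add: mult.assoc mult_left_mono)
  also have "\<dots> = t\<^sup>2 * 2 * exp (1 / s) * E"
    using s by (simp add: u_def E_def field_simps flip: exp_add)
  finally have remainder: "\<bar>exp q - 1 - q\<bar> \<le> t\<^sup>2 * 2 * exp (1 / s) * E" .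
  have "exp q - 1 + t * x / s = (exp q - 1 - q) - t\<^sup>2 / (2 * s)"
    by (simp add: q_def)
  then have "\<bar>exp q - 1 + t * x / s\<bar> \<le> \<bar>exp q - 1 - q\<bar> + t\<^sup>2 / (2 * s)"
    using abs_triangle_ineq4[of "exp q - 1 - q" "t\<^sup>2 / (2 * s)"] s by simp
  also have "\<dots> \<le> t\<^sup>2 * 2 * exp (1 / s) * E + t\<^sup>2 / (2 * s) * E"
    using remainder mult_left_mono[OF \<open>1 \<le> E\<close>, of "t\<^sup>2 / (2 * s)"] s by (intro add_mono) simp_all
  finally show ?thesis
    by (simp add: q_def E_def algebra_simps)
qed

context
  fixes g :: "real^'n \<Rightarrow> real^'n" and s :: real
  assumes s: "s > 0"
    and integrable_kernel: "\<And>x. integrable lborel (\<lambda>z. gauss_density s z *\<^sub>R g (x - z))"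
begin

lemma borel_measurable_of_gauss_integrable [measurable]: "g \<in> borel_measurable borel"
proof -
  have [measurable]: "(\<lambda>z. gauss_density s z *\<^sub>R g (- z)) \<in> borel_measurable borel"
    using borel_measurable_integrable[OF integrable_kernel[of 0]] by simp
  have "(\<lambda>z. inverse (gauss_density s z) *\<^sub>R (gauss_density s z *\<^sub>R g (- z))) \<in> borel_measurable borel"
    by measurable
  moreover have "(\<lambda>z. inverse (gauss_density s z) *\<^sub>R (gauss_density s z *\<^sub>R g (- z))) = (\<lambda>z. g (- z))"
    using s by (simp add: fun_eq_iff gauss_density_pos less_imp_neq[THEN not_sym])
  ultimately have "(\<lambda>z. g (- z)) \<in> borel_measurable borel"
    by simp
  from measurable_compose[OF borel_measurable_uminus[OF measurable_ident] this] show ?thesis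
    by simp
qed

lemma gauss_conv_translate:
  "gauss_conv g s (y + v) = (\<integral>z. gauss_density s (v + z) *\<^sub>R g (y - z) \<partial>lborel)"
  unfolding gauss_conv_def
  using lborel_integral_affine[of 1 "\<lambda>z. gauss_density s z *\<^sub>R g (y + v - z)" v]
  by (simp add: algebra_simps)

lemma integrable_translated_kernel:
  "integrable lborel (\<lambda>z. gauss_density s (v + z) *\<^sub>R g (y - z))"
  using lborel_integrable_affine[OF integrable_kernel[of "y + v"], of 1 v]
  by (simp add: algebra_simps)

lemma integrable_translated_kernel_norm:
  "integrable lborel (\<lambda>z. gauss_density s (v + z) * norm (g (y - z)))"
  using integrable_norm[OF integrable_translated_kernel[of v y]]
  by (simp add: gauss_density_nonneg)

lemma integrable_kernel_exp_abs_norm: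
  "integrable lborel (\<lambda>z. gauss_density s z * exp (a * \<bar>z $ i\<bar> / s) * norm (g (y - z)))"
proof (rule Bochner_Integration.integrable_bound)
  show "integrable lborel (\<lambda>z. exp (a\<^sup>2 / (2 * s)) * (gauss_density s ((- a) *\<^sub>R axis i 1 + z) * norm (g (y - z))
      + gauss_density s (a *\<^sub>R axis i 1 + z) * norm (g (y - z))))"
    using Bochner_Integration.integrable_add[OF integrable_translated_kernel_norm integrable_translated_kernel_norm,
        of "(- a) *\<^sub>R axis i 1" y "a *\<^sub>R axis i 1" y]
    by simp
  show "AE z in lborel. norm (gauss_density s z * exp (a * \<bar>z $ i\<bar> / s) * norm (g (y - z)))
      \<le> norm (exp (a\<^sup>2 / (2 * s)) * (gauss_density s ((- a) *\<^sub>R axis i 1 + z) * norm (g (y - z))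
        + gauss_density s (a *\<^sub>R axis i 1 + z) * norm (g (y - z))))"
  proof (intro AE_I2)
    fix z :: "real^'n"
    have "gauss_density s z * exp (a * \<bar>z $ i\<bar> / s) * norm (g (y - z))
        \<le> exp (a\<^sup>2 / (2 * s)) * (gauss_density s ((- a) *\<^sub>R axis i 1 + z) * norm (g (y - z))
          + gauss_density s (a *\<^sub>R axis i 1 + z) * norm (g (y - z)))"
      using mult_right_mono[OF gauss_density_mult_exp_abs_le[OF s, of z a i] norm_ge_zero[of "g (y - z)"]]
      by (simp add: algebra_simps)
    then show "norm (gauss_density s z * exp (a * \<bar>z $ i\<bar> / s) * norm (g (y - z)))
        \<le> norm (exp (a\<^sup>2 / (2 * s)) * (gauss_density s ((- a) *\<^sub>R axis i 1 + z) * norm (g (y - z))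
          + gauss_density s (a *\<^sub>R axis i 1 + z) * norm (g (y - z))))"
      using gauss_density_pos[OF s, of z] by simp
  qed
qed measurable

lemma integrable_stein_integrand:
  "integrable lborel (\<lambda>z. gauss_density s z * (- z $ i / s) * g (y - z) $ i)"
proof (rule Bochner_Integration.integrable_bound[OF integrable_kernel_exp_abs_norm[of 1 i y]])
  show "AE z in lborel. norm (gauss_density s z * (- z $ i / s) * g (y - z) $ i)
      \<le> norm (gauss_density s z * exp (1 * \<bar>z $ i\<bar> / s) * norm (g (y - z)))"
  proof (intro AE_I2)
    fix z :: "real^'n"
    have "\<bar>z $ i\<bar> / s \<le> exp (\<bar>z $ i\<bar> / s)"
      using exp_ge_add_one_self[of "\<bar>z $ i\<bar> / s"] by linarith
    then have "\<bar>- z $ i / s\<bar> * \<bar>g (y - z) $ i\<bar> \<le> exp (\<bar>z $ i\<bar> / s) * norm (g (y - z))"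
      using s component_le_norm_cart[of "g (y - z)" i] by (intro mult_mono) (auto simp: abs_divide)
    then show "norm (gauss_density s z * (- z $ i / s) * g (y - z) $ i)
        \<le> norm (gauss_density s z * exp (1 * \<bar>z $ i\<bar> / s) * norm (g (y - z)))"
      using mult_left_mono[OF _ gauss_density_nonneg, of "\<bar>- z $ i / s\<bar> * \<bar>g (y - z) $ i\<bar>"]
      by (simp add: abs_mult mult.assoc gauss_density_nonneg)
  qed
qed measurable

lemma has_real_derivative_gauss_conv_axis:
  "((\<lambda>t. gauss_conv g s (y + t *\<^sub>R axis i 1) $ i) has_real_derivative
     (\<integral>z. gauss_density s z * (- z $ i / s) * g (y - z) $ i \<partial>lborel)) (at 0)"
proof -
  have conv: "gauss_conv g s (y + t *\<^sub>R axis i 1) $ i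
      = (\<integral>z. gauss_density s (t *\<^sub>R axis i 1 + z) * g (y - z) $ i \<partial>lborel)" for t
    using integral_bounded_linear[OF bounded_linear_vec_nth[of i] integrable_translated_kernel]
    by (simp add: gauss_conv_translate)
  show ?thesis
    unfolding conv
  proof (rule has_real_derivative_integral_quadratic_remainder)
    show "integrable lborel (\<lambda>z. gauss_density s (t *\<^sub>R axis i 1 + z) * g (y - z) $ i)" for t
      using integrable_bounded_linear[OF bounded_linear_vec_nth[of i] integrable_translated_kernel]
      by simp
    show "integrable lborel (\<lambda>z. gauss_density s z * (- z $ i / s) * g (y - z) $ i)"
      by (rule integrable_stein_integrand)
    show "integrable lborel (\<lambda>z. (2 * exp (1 / s) + 1 / (2 * s))
        * (gauss_density s z * exp (2 * \<bar>z $ i\<bar> / s) * norm (g (y - z))))"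
      using integrable_kernel_exp_abs_norm by simp
  next
    fix t :: real and z :: "real^'n"
    assume t: "\<bar>t\<bar> \<le> 1"
    have "gauss_density s (t *\<^sub>R axis i 1 + z) * g (y - z) $ i
        - gauss_density s (0 *\<^sub>R axis i 1 + z) * g (y - z) $ i
        - t * (gauss_density s z * (- z $ i / s) * g (y - z) $ i)
      = gauss_density s z * g (y - z) $ i
        * (exp (- t * z $ i / s - t\<^sup>2 / (2 * s)) - 1 + t * z $ i / s)"
      unfolding gauss_density_translate_axis[OF s] by (simp add: algebra_simps)
    then have "\<bar>gauss_density s (t *\<^sub>R axis i 1 + z) * g (y - z) $ i
        - gauss_density s (0 *\<^sub>R axis i 1 + z) * g (y - z) $ i
        - t * (gauss_density s z * (- z $ i / s) * g (y - z) $ i)\<bar>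
      = gauss_density s z * \<bar>g (y - z) $ i\<bar>
        * \<bar>exp (- t * z $ i / s - t\<^sup>2 / (2 * s)) - 1 + t * z $ i / s\<bar>"
      by (simp add: abs_mult gauss_density_nonneg)
    also have "\<dots> \<le> gauss_density s z * norm (g (y - z))
        * (t\<^sup>2 * (2 * exp (1 / s) + 1 / (2 * s)) * exp (2 * \<bar>z $ i\<bar> / s))"
      using gauss_density_pos[OF s, of z] component_le_norm_cart[of "g (y - z)" i]
        gauss_tilt_remainder_le[OF s t, of "z $ i"]
      by (intro mult_mono mult_left_mono) auto
    finally show "\<bar>gauss_density s (t *\<^sub>R axis i 1 + z) * g (y - z) $ i
        - gauss_density s (0 *\<^sub>R axis i 1 + z) * g (y - z) $ i
        - t * (gauss_density s z * (- z $ i / s) * g (y - z) $ i)\<bar>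
      \<le> t\<^sup>2 * ((2 * exp (1 / s) + 1 / (2 * s))
        * (gauss_density s z * exp (2 * \<bar>z $ i\<bar> / s) * norm (g (y - z))))"
      by (simp only: mult_ac)
  qed
qed

lemma divergence_gauss_conv:
  "divergence (gauss_conv g s) y = - (\<integral>z. gauss_density s z * (z \<bullet> g (y - z)) \<partial>lborel) / s"
proof -
  have "divergence (gauss_conv g s) y
      = (\<Sum>i\<in>UNIV. \<integral>z. gauss_density s z * (- z $ i / s) * g (y - z) $ i \<partial>lborel)"
    unfolding divergence_def
    by (intro sum.cong refl DERIV_imp_deriv has_real_derivative_gauss_conv_axis)
  also have "\<dots> = (\<integral>z. (\<Sum>i\<in>UNIV. gauss_density s z * (- z $ i / s) * g (y - z) $ i) \<partial>lborel)"
    using integrable_stein_integrand by (simp add: integral_sum)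
  also have "\<dots> = (\<integral>z. (- 1 / s) * (gauss_density s z * (z \<bullet> g (y - z))) \<partial>lborel)"
  proof (rule Bochner_Integration.integral_cong[OF refl])
    fix z :: "real^'n"
    have "(\<Sum>i\<in>UNIV. gauss_density s z * (- z $ i / s) * g (y - z) $ i)
        = (\<Sum>i\<in>UNIV. (- 1 / s) * (gauss_density s z * (z $ i * g (y - z) $ i)))"
      by (rule sum.cong) (auto simp: field_simps)
    then show "(\<Sum>i\<in>UNIV. gauss_density s z * (- z $ i / s) * g (y - z) $ i)
        = (- 1 / s) * (gauss_density s z * (z \<bullet> g (y - z)))"
      by (simp only: inner_vec_def sum_distrib_left inner_real_def)
  qed
  finally show ?thesis
    by simp
qed

end

theorem proposition1:
  fixes g :: "real^'n \<Rightarrow> real^'n" and sigma2 alpha :: real and y :: "real^'n"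
  assumes "sigma2 > 0" and "alpha > 0"
    and "\<And>x. integrable lborel (\<lambda>z. gauss_density (alpha * sigma2) z *\<^sub>R g (x - z))"
  shows "(norm (y - (\<integral>w. gauss_density sigma2 w *\<^sub>R g (y + sqrt alpha *\<^sub>R w) \<partial>lborel)))\<^sup>2
           + 2 / sqrt alpha * (\<integral>w. gauss_density sigma2 w * (w \<bullet> g (y + sqrt alpha *\<^sub>R w)) \<partial>lborel)
         = SURE sigma2 (gauss_conv g (alpha * sigma2)) y"
proof -
  define s where "s = alpha * sigma2"
  define I where "I = (\<integral>w. gauss_density sigma2 w * (w \<bullet> g (y + sqrt alpha *\<^sub>R w)) \<partial>lborel)"
  have "s > 0" and c: "- sqrt alpha \<noteq> 0" and s_eq: "(- sqrt alpha)\<^sup>2 * sigma2 = s"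
    using assms(1,2) by (simp_all add: s_def)
  have "gauss_conv g s y = (\<integral>w. gauss_density sigma2 w *\<^sub>R g (y + sqrt alpha *\<^sub>R w) \<partial>lborel)"
    using integral_gauss_density_rescale[OF assms(1) c, of "\<lambda>z. g (y - z)"]
    unfolding gauss_conv_def s_eq by simp
  moreover have "(\<integral>z. gauss_density s z * (z \<bullet> g (y - z)) \<partial>lborel) = - sqrt alpha * I"
    using integral_gauss_density_rescale[OF assms(1) c, of "\<lambda>z. z \<bullet> g (y - z)"]
    unfolding s_eq I_def by (simp add: mult.left_commute)
  then have "divergence (gauss_conv g s) y = sqrt alpha / s * I"
    using divergence_gauss_conv[OF \<open>s > 0\<close> assms(3)[folded s_def]] by simp
  moreover have "2 / sqrt alpha = 2 * sigma2 * (sqrt alpha / s)"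
    using assms(1,2) by (simp add: s_def field_simps)
  ultimately show ?thesis
    unfolding SURE_def s_def[symmetric] I_def[symmetric] by simp
qed

end
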